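(* In the depth-3 instance described below, let $s_e$ denote the probability that the edge $e$ belongs to the set $A$ produced by the shadow distribution. Then for every edge $e\in E$, $x_e\le s_e\le 6x_e$.
   Context: Depth-3 instance: fix a small constant $\rho>0$ and a large integer $m$ with $\rho m\in\mathbb N$, ground set $[m]$. Layers: $L_0=\{s\}$ ($S_s=\emptyset$); $L_1$ has one vertex $u$ for each $S_u\subseteq[m]$ with $|S_u|=\rho m$; $L_2$ one vertex for each subset of size $2\rho m$; $L_3$ (the sinks) one vertex for each subset of size $\rho m$. Edges: $s$ to every vertex of $L_1$; $(u,v)$ with $u\in L_1,v\in L_2$ iff $S_u\subseteq S_v$; $(u,v)$ with $u\in L_2,v\in L_3$ iff $S_v\subseteq S_u$. For an edge $e=(u,v)$ write $S_e=S_v$, and say $e\in L_i$ if $v\in L_i$. $D(e)$ denotes the set of edges $(a,b)$ such that $a$ is reachable by a directed path (possibly of length 0) from the endpoint of $e$. Assignment solution: $x_e=\binom{(1-\rho)m}{\rho m}^{-1}$ for $e\in L_1$, $x_e=\binom{(1-\rho)m}{\rho m}^{-1}\binom{2\rho m}{\rho m}^{-1}$ for $e\in L_2$, $x_e=\binom{(1-\rho)m}{\rho m}^{-1}$ for $e\in L_3$. Subtree solutions $x^{(e)}$: for $e\in L_1$, $x^{(e)}_{e'}=1$ if $e'=e$; $\binom{2\rho m}{\rho m}^{-1}$ if $e'\in L_2\cap D(e)$; $\frac{\binom{(1-\rho)m}{\rho m}}{\binom{m}{\rho m}}\binom{m-2\rho m+|S_{e'}\cap S_e|}{|S_{e'}\cap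 S_e|}^{-1}$ if $e'\in L_3\cap D(e)$; $0$ otherwise. For $e\in L_2$, $x^{(e)}_{e'}=1$ if $e'=e$ or $e'\in L_3\cap D(e)$, else $0$. For $e\in L_3$, $x^{(e)}_{e'}=1$ iff $e'=e$, else $0$. Shadow distribution: choose a random set $S$ containing each edge $e$ independently with probability $x_e$; for each $e\in S$ independently draw a set $S_e$ containing each edge $e'$ independently with probability $x^{(e)}_{e'}$; output $A=\bigcup_{e\in S}S_e$. *)

theory Defs
  imports "HOL-Probability.Probability"
begin

text \<open>Depth-3 instance. The parameter k stands for rho*m. Vertices are pairs
(layer, set); the source is (0, {}). The ground set [m] is {1..m}.\<close>

type_synonym vtx = "nat \<times> nat set"
type_synonym edg = "vtx \<times> vtx"

definition edges3 :: "nat \<Rightarrow> nat \<Rightarrow> edg set" where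
  "edges3 m k =
     {((0, {}), (1, S)) | S. S \<subseteq> {1..m} \<and> card S = k}
   \<union> {((1, S), (2, T)) | S T. S \<subseteq> {1..m} \<and> card S = k \<and> T \<subseteq> {1..m} \<and> card T = 2 * k \<and> S \<subseteq> T}
   \<union> {((2, T), (3, U)) | T U. T \<subseteq> {1..m} \<and> card T = 2 * k \<and> U \<subseteq> {1..m} \<and> card U = k \<and> U \<subseteq> T}"

definition elayer :: "edg \<Rightarrow> nat" where "elayer e = fst (snd e)"
definition eset :: "edg \<Rightarrow> nat set" where "eset e = snd (snd e)"

definition desc :: "nat \<Rightarrow> nat \<Rightarrow> edg \<Rightarrow> edg set" where
  "desc m k e = {f \<in> edges3 m k. (snd e, fst f) \<in> (edges3 m k)\<^sup>*}"

definition xsol :: "nat \<Rightarrow> nat \<Rightarrow> edg \<Rightarrow> real" where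
  "xsol m k e =
     (if elayer e = 2 then 1 / (real ((m - k) choose k) * real ((2 * k) choose k))
      else 1 / real ((m - k) choose k))"

definition xsub :: "nat \<Rightarrow> nat \<Rightarrow> edg \<Rightarrow> edg \<Rightarrow> real" where
  "xsub m k e e' =
     (if e' = e then 1
      else if e' \<in> desc m k e then
        (if elayer e = 1 then
           (if elayer e' = 2 then 1 / real ((2 * k) choose k)
            else if elayer e' = 3 then
              (real ((m - k) choose k) / real (m choose k)) /
                real ((m - 2 * k + card (eset e' \<inter> eset e)) choose card (eset e' \<inter> eset e))
            else 0)
         else if elayer e = 2 then (if elayer e' = 3 then 1 else 0)
         else 0)
      else 0)"

definition rand_subset :: "edg set \<Rightarrow> (edg \<Rightarrow> real) \<Rightarrow> edg set pmf" where
  "rand_subset E p = map_pmf (\<lambda>b. {e \<in> E. b e}) (Pi_pmf E False (\<lambda>e. bernoulli_pmf (p e)))"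

definition shadow :: "nat \<Rightarrow> nat \<Rightarrow> edg set pmf" where
  "shadow m k =
     bind_pmf (rand_subset (edges3 m k) (xsol m k)) (\<lambda>S.
     bind_pmf (Pi_pmf S {} (\<lambda>f. rand_subset (edges3 m k) (xsub m k f))) (\<lambda>T.
     return_pmf (\<Union>f\<in>S. T f)))"

definition sprob :: "nat \<Rightarrow> nat \<Rightarrow> edg \<Rightarrow> real" where
  "sprob m k e = measure_pmf.prob (shadow m k) {A. e \<in> A}"

end

theory Submission
  imports Defs
begin

text \<open>The shadow misses e exactly when every edge f is either not sampled in the first round
or does not put e into its own sample. By independence, P(e \<notin> A) = prod_f (1 - x_f x^(f)_e),
so x_e \<le> s_e \<le> sum_f x_f x^(f)_e, using x^(e)_e = 1 and the union bound. Only e itself and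
the edges above e contribute to this sum, which equals x_e, 2 x_e and 3 x_e on the layers
L_1, L_2, L_3 as soon as 2 \<rho> \<le> 1. For e in L_3 the contribution of L_1, grouped by
j = |S_f \<inter> S_e|, is the Vandermonde-type identity
  sum_j C(k,j)^2 / C(m-2k+j, j) = C(m,k) / C(m-k,k),   where k = \<rho> m.\<close>

section \<open>Elementary inequalities and binomial identities\<close>

lemma one_minus_prod_one_minus_le_sum:
  fixes c :: "'a \<Rightarrow> real"
  assumes "\<And>x. x \<in> A \<Longrightarrow> 0 \<le> c x \<and> c x \<le> 1"
  shows "1 - (\<Prod>x\<in>A. 1 - c x) \<le> (\<Sum>x\<in>A. c x)"
  using assms
proof (induction A rule: infinite_finite_induct)
  case (insert a A)
  have "(\<Prod>x\<in>A. 1 - c x) \<le> 1"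
    using insert.prems by (intro prod_le_1) auto
  hence "c a * (\<Prod>x\<in>A. 1 - c x) \<le> c a"
    using insert.prems by (simp add: mult_left_le)
  with insert show ?case by (simp add: algebra_simps)
qed simp_all

lemma le_one_minus_prod_one_minus:
  fixes c :: "'a \<Rightarrow> real"
  assumes "finite A" "a \<in> A" "\<And>x. x \<in> A \<Longrightarrow> 0 \<le> c x \<and> c x \<le> 1"
  shows "c a \<le> 1 - (\<Prod>x\<in>A. 1 - c x)"
proof -
  have "(\<Prod>x\<in>A - {a}. 1 - c x) \<le> 1"
    using assms(3) by (intro prod_le_1) auto
  moreover have "0 \<le> 1 - c a"
    using assms(2,3) by simp
  ultimately have "(1 - c a) * (\<Prod>x\<in>A - {a}. 1 - c x) \<le> 1 - c a"
    by (simp add: mult_left_le)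
  thus ?thesis
    using prod.remove[OF assms(1,2), of "\<lambda>x. 1 - c x"] by simp
qed

lemma divide_of_nat_bounds: "0 \<le> q \<Longrightarrow> q \<le> 1 \<Longrightarrow> 0 \<le> q / real n \<and> q / real n \<le> 1"
  by (cases n) (auto simp: field_simps)

lemma binomial_mono_upper: "a \<le> b \<Longrightarrow> a choose k \<le> b choose k"
  unfolding binomial_def by (intro card_mono) auto

lemma binomial_mult_shift:
  assumes "j \<le> k"
  shows "(n + j choose j) * (n + k choose (k - j)) = (n + k choose k) * (k choose j)"
proof -
  have "(n + k choose k) * (k choose j) = (n + k choose j) * (n + k - j choose (k - j))"
    using assms by (intro choose_mult) auto
  moreover have "(n + k choose (n + j)) * (n + j choose j) = (n + k choose j) * (n + k - j choose n)"
    using assms choose_mult[of j "n + j" "n + k"] by simp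
  moreover have "n + k choose (k - j) = n + k choose (n + j)"
    using assms binomial_symmetric[of "k - j" "n + k"] by (simp add: algebra_simps)
  moreover have "n + k - j choose (k - j) = n + k - j choose n"
    using assms binomial_symmetric[of "k - j" "n + k - j"] by simp
  ultimately show ?thesis by (simp add: algebra_simps)
qed

lemma sum_binomial_sq_div_binomial:
  "(\<Sum>j\<le>k. real (k choose j) * real (k choose (k - j)) / real (n + j choose j))
     = real (n + 2 * k choose k) / real (n + k choose k)"
proof -
  have "(\<Sum>j\<le>k. real (k choose j) * real (k choose (k - j)) / real (n + j choose j))
      = (\<Sum>j\<le>k. real (k choose j) * real (n + k choose (k - j)) / real (n + k choose k))"
  proof (intro sum.cong refl)
    fix j assume "j \<in> {..k}"
    hence jk: "j \<le> k" by simp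
    have "real (n + j choose j) * real (n + k choose (k - j)) = real (n + k choose k) * real (k choose j)"
      using binomial_mult_shift[OF jk, of n] by (metis of_nat_mult)
    moreover have "k choose (k - j) = k choose j"
      using binomial_symmetric[OF jk] by simp
    moreover have "real (n + j choose j) > 0" "real (n + k choose k) > 0"
      by simp_all
    ultimately show "real (k choose j) * real (k choose (k - j)) / real (n + j choose j)
        = real (k choose j) * real (n + k choose (k - j)) / real (n + k choose k)"
      by (simp add: field_simps)
  qed
  also have "\<dots> = real (\<Sum>j\<le>k. (k choose j) * (n + k choose (k - j))) / real (n + k choose k)"
    by (simp add: sum_divide_distrib)
  also have "(\<Sum>j\<le>k. (k choose j) * (n + k choose (k - j))) = n + 2 * k choose k"
    using vandermonde[of k "n + k" k] by (simp add: add.commute add.left_commute mult_2)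
  finally show ?thesis .
qed

lemma card_subsets_card_inter:
  assumes fU: "finite U" and fW: "finite W" and dis: "U \<inter> W = {}" and "j \<le> k"
  shows "card {S. S \<subseteq> U \<union> W \<and> card S = k \<and> card (U \<inter> S) = j}
           = (card U choose j) * (card W choose (k - j))"
proof -
  let ?X = "{X. X \<subseteq> U \<and> card X = j}" and ?Y = "{Y. Y \<subseteq> W \<and> card Y = k - j}"
  let ?P = "{S. S \<subseteq> U \<union> W \<and> card S = k \<and> card (U \<inter> S) = j}"
  have union_in: "X \<union> Y \<in> ?P" if "X \<in> ?X" "Y \<in> ?Y" for X Y
  proof -
    have "finite X" "finite Y" "X \<inter> Y = {}" "U \<inter> (X \<union> Y) = X"
      using that fU fW dis finite_subset by auto
    thus ?thesis
      using that \<open>j \<le> k\<close> by (auto simp: card_Un_disjoint)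
  qed
  have split_in: "(U \<inter> S, W \<inter> S) \<in> ?X \<times> ?Y" if "S \<in> ?P" for S
  proof -
    have "S = (U \<inter> S) \<union> (W \<inter> S)" "(U \<inter> S) \<inter> (W \<inter> S) = {}"
      using that dis by auto
    hence "card S = card (U \<inter> S) + card (W \<inter> S)"
      using fU fW by (metis card_Un_disjoint finite_Int)
    thus ?thesis
      using that by auto
  qed
  have "bij_betw (\<lambda>(X, Y). X \<union> Y) (?X \<times> ?Y) ?P"
    by (rule bij_betwI[where g = "\<lambda>S. (U \<inter> S, W \<inter> S)"]) (use union_in split_in dis in auto)
  hence "card ?P = card (?X \<times> ?Y)"
    by (simp add: bij_betw_same_card)
  thus ?thesis
    using n_subsets[OF fU] n_subsets[OF fW] by (simp add: card_cartesian_product)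
qed

lemma sum_subsets_by_card_inter:
  fixes g :: "nat \<Rightarrow> real"
  assumes fU: "finite U" and fW: "finite W" and dis: "U \<inter> W = {}"
  shows "(\<Sum>S | S \<subseteq> U \<union> W \<and> card S = k. g (card (U \<inter> S)))
       = (\<Sum>j\<le>k. real (card U choose j) * real (card W choose (k - j)) * g j)"
proof -
  let ?A = "{S. S \<subseteq> U \<union> W \<and> card S = k}"
  have "finite ?A"
    using fU fW by (auto intro: finite_subset[of _ "Pow (U \<union> W)"])
  moreover have "card (U \<inter> S) \<in> {..k}" if "S \<in> ?A" for S
  proof -
    have "finite S"
      using that fU fW finite_subset by blast
    hence "card (U \<inter> S) \<le> card S"
      by (simp add: card_mono)
    thus ?thesis
      using that by simp
  qed
  ultimately have "(\<Sum>S\<in>?A. g (card (U \<inter> S)))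
      = (\<Sum>j\<le>k. \<Sum>S | S \<in> ?A \<and> card (U \<inter> S) = j. g (card (U \<inter> S)))"
    by (intro sum.group[symmetric]) auto
  also have "\<dots> = (\<Sum>j\<le>k. \<Sum>S | S \<in> ?A \<and> card (U \<inter> S) = j. g j)"
    by (intro sum.cong refl) simp
  also have "\<dots> = (\<Sum>j\<le>k. real (card U choose j) * real (card W choose (k - j)) * g j)"
    using card_subsets_card_inter[OF fU fW dis] by (intro sum.cong refl) (simp add: conj_assoc)
  finally show ?thesis .
qed

lemma sum_subsets_inv_binomial_card_inter:
  assumes "finite T" "U \<subseteq> T" "card U = k" "card T = 2 * k"
  shows "(\<Sum>S | S \<subseteq> T \<and> card S = k. 1 / real (n + card (U \<inter> S) choose card (U \<inter> S)))
       = real (n + 2 * k choose k) / real (n + k choose k)"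
proof -
  have "T = U \<union> (T - U)" "finite U" "card (T - U) = k"
    using assms by (auto simp: card_Diff_subset finite_subset)
  hence "(\<Sum>S | S \<subseteq> T \<and> card S = k. 1 / real (n + card (U \<inter> S) choose card (U \<inter> S)))
      = (\<Sum>j\<le>k. real (k choose j) * real (k choose (k - j)) * (1 / real (n + j choose j)))"
    using sum_subsets_by_card_inter[of U "T - U" "\<lambda>j. 1 / real (n + j choose j)" k] assms
    by (simp add: Un_Diff_cancel2)
  also have "\<dots> = real (n + 2 * k choose k) / real (n + k choose k)"
    using sum_binomial_sq_div_binomial by simp
  finally show ?thesis .
qed

section \<open>The shadow distribution\<close>

definition shadow_pmf :: "edg set \<Rightarrow> (edg \<Rightarrow> real) \<Rightarrow> (edg \<Rightarrow> edg \<Rightarrow> real) \<Rightarrow> edg set pmf" where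
  "shadow_pmf E x y =
     bind_pmf (rand_subset E x) (\<lambda>S.
     bind_pmf (Pi_pmf S {} (\<lambda>f. rand_subset E (y f))) (\<lambda>T.
     return_pmf (\<Union>f\<in>S. T f)))"

lemma prob_not_in_rand_subset:
  assumes "finite E" "e \<in> E" "0 \<le> p e" "p e \<le> 1"
  shows "measure_pmf.prob (rand_subset E p) {X. e \<notin> X} = 1 - p e"
proof -
  have "(\<lambda>b. {e \<in> E. b e}) -` {X. e \<notin> X} = (\<lambda>b. b e) -` {False}"
    using assms by auto
  hence "measure_pmf.prob (rand_subset E p) {X. e \<notin> X} =
     measure_pmf.prob (map_pmf (\<lambda>b. b e) (Pi_pmf E False (\<lambda>e. bernoulli_pmf (p e)))) {False}"
    unfolding rand_subset_def by simp
  also have "\<dots> = 1 - p e"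
    using assms by (simp add: Pi_pmf_component measure_pmf_single)
  finally show ?thesis .
qed

lemma prob_not_in_union_Pi_pmf:
  assumes "finite S" "finite E" "e \<in> E" "\<And>f. 0 \<le> y f e \<and> y f e \<le> 1"
  shows "measure_pmf.prob (map_pmf (\<lambda>T. \<Union>f\<in>S. T f) (Pi_pmf S {} (\<lambda>f. rand_subset E (y f))))
           {A. e \<notin> A} = (\<Prod>f\<in>S. 1 - y f e)"
proof -
  have "(\<lambda>T. \<Union>f\<in>S. T f) -` {A. e \<notin> A} = Pi S (\<lambda>_. {X. e \<notin> X})"
    by auto
  hence "measure_pmf.prob (map_pmf (\<lambda>T. \<Union>f\<in>S. T f) (Pi_pmf S {} (\<lambda>f. rand_subset E (y f))))
           {A. e \<notin> A}
       = measure_pmf.prob (Pi_pmf S {} (\<lambda>f. rand_subset E (y f))) (Pi S (\<lambda>_. {X. e \<notin> X}))"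
    by (simp only: measure_map_pmf)
  also have "\<dots> = (\<Prod>f\<in>S. measure_pmf.prob (rand_subset E (y f)) {X. e \<notin> X})"
    using assms(1) by (rule measure_Pi_pmf_Pi)
  also have "\<dots> = (\<Prod>f\<in>S. 1 - y f e)"
    using assms(2-4) by (simp add: prob_not_in_rand_subset)
  finally show ?thesis .
qed

lemma prob_not_in_shadow_pmf:
  assumes fin: "finite E" and e: "e \<in> E"
    and x01: "\<And>f. 0 \<le> x f \<and> x f \<le> 1" and y01: "\<And>f. 0 \<le> y f e \<and> y f e \<le> 1"
  shows "measure_pmf.prob (shadow_pmf E x y) {A. e \<notin> A} = (\<Prod>f\<in>E. 1 - x f * y f e)"
proof -
  define B where "B = Pi_pmf E False (\<lambda>f. bernoulli_pmf (x f))"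
  define K where "K S = map_pmf (\<lambda>T. \<Union>f\<in>S. T f) (Pi_pmf S {} (\<lambda>f. rand_subset E (y f)))" for S
  have "shadow_pmf E x y = bind_pmf (rand_subset E x) K"
    unfolding shadow_pmf_def K_def map_pmf_def by simp
  also have "\<dots> = bind_pmf B (\<lambda>b. K {f \<in> E. b f})"
    unfolding rand_subset_def B_def by (simp add: bind_map_pmf)
  finally have "measure_pmf.prob (shadow_pmf E x y) {A. e \<notin> A}
      = pmf (map_pmf (\<lambda>A. e \<in> A) (bind_pmf B (\<lambda>b. K {f \<in> E. b f}))) False"
    by (simp add: pmf_map vimage_def)
  also have "\<dots> = measure_pmf.expectation B (\<lambda>b. \<Prod>f\<in>E. if b f then 1 - y f e else 1)"
  proof -
    have "pmf (map_pmf (\<lambda>A. e \<in> A) (K {f \<in> E. b f})) False = (\<Prod>f\<in>E. if b f then 1 - y f e else 1)"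
      for b
    proof -
      have "pmf (map_pmf (\<lambda>A. e \<in> A) (K {f \<in> E. b f})) False = (\<Prod>f\<in>{f \<in> E. b f}. 1 - y f e)"
        using prob_not_in_union_Pi_pmf[of "{f \<in> E. b f}" E e y] fin e y01
        unfolding K_def by (simp add: pmf_map vimage_def)
      also have "\<dots> = (\<Prod>f\<in>E. if b f then 1 - y f e else 1)"
        using fin by (simp add: prod.inter_filter)
      finally show ?thesis .
    qed
    thus ?thesis by (simp add: map_bind_pmf pmf_bind)
  qed
  also have "\<dots> = (\<Prod>f\<in>E. measure_pmf.expectation (bernoulli_pmf (x f)) (\<lambda>v. if v then 1 - y f e else 1))"
    unfolding B_def
    by (rule expectation_prod_Pi_pmf[OF fin, where f = "\<lambda>f v. if v then 1 - y f e else 1"])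
       (auto intro: integrable_measure_pmf_finite simp: y01)
  also have "\<dots> = (\<Prod>f\<in>E. 1 - x f * y f e)"
    using x01 by (intro prod.cong refl) (simp add: algebra_simps)
  finally show ?thesis .
qed

lemma prob_in_shadow_pmf_bounds:
  assumes "finite E" "e \<in> E" "y e e = 1"
    and x01: "\<And>f. 0 \<le> x f \<and> x f \<le> 1" and y01: "\<And>f. 0 \<le> y f e \<and> y f e \<le> 1"
  shows "x e \<le> measure_pmf.prob (shadow_pmf E x y) {A. e \<in> A}"
    and "measure_pmf.prob (shadow_pmf E x y) {A. e \<in> A} \<le> (\<Sum>f\<in>E. x f * y f e)"
proof -
  have "measure_pmf.prob (shadow_pmf E x y) {A. e \<in> A}
      = 1 - measure_pmf.prob (shadow_pmf E x y) {A. e \<notin> A}"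
    using measure_pmf.prob_compl[of "{A. e \<notin> A}" "shadow_pmf E x y"]
    by (simp add: Compl_eq_Diff_UNIV[symmetric] Collect_neg_eq[symmetric])
  also have "\<dots> = 1 - (\<Prod>f\<in>E. 1 - x f * y f e)"
    using assms by (simp add: prob_not_in_shadow_pmf)
  finally have prob_in: "measure_pmf.prob (shadow_pmf E x y) {A. e \<in> A} = \<dots>" .
  have c01: "0 \<le> x f * y f e \<and> x f * y f e \<le> 1" for f
    using x01[of f] y01[of f] by (simp add: mult_le_one)
  show "x e \<le> measure_pmf.prob (shadow_pmf E x y) {A. e \<in> A}"
    using le_one_minus_prod_one_minus[of E e "\<lambda>f. x f * y f e"] assms(1-3) c01
    unfolding prob_in by simp
  show "measure_pmf.prob (shadow_pmf E x y) {A. e \<in> A} \<le> (\<Sum>f\<in>E. x f * y f e)"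
    using one_minus_prod_one_minus_le_sum[of E "\<lambda>f. x f * y f e"] c01
    unfolding prob_in by simp
qed

section \<open>The depth-3 instance\<close>

lemma finite_edges3: "finite (edges3 m k)"
proof -
  have "edges3 m k \<subseteq> ({0, 1, 2} \<times> Pow {1..m}) \<times> ({1, 2, 3} \<times> Pow {1..m})"
    unfolding edges3_def by auto
  thus ?thesis
    by (rule finite_subset) auto
qed

lemma rtrancl_edges3_layer:
  assumes "(u, v) \<in> (edges3 m k)\<^sup>*"
  shows "u = v \<or> fst u < fst v \<and> (fst u = 1 \<longrightarrow> fst v = 2 \<longrightarrow> snd u \<subseteq> snd v)"
  using assms
proof (induction rule: rtrancl_induct)
  case (step w v)
  have "fst v = Suc (fst w) \<and> (fst w = 1 \<longrightarrow> snd w \<subseteq> snd v)"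
    using step.hyps(2) unfolding edges3_def by auto
  with step.IH show ?case
    by auto
qed simp

lemma head_layer_edges3: "f \<in> edges3 m k \<Longrightarrow> fst (snd f) \<ge> 1"
  unfolding edges3_def by auto

lemma xsol_bounds: "0 \<le> xsol m k f \<and> xsol m k f \<le> 1"
  using divide_of_nat_bounds[of 1 "(m - k choose k) * (2 * k choose k)"]
    divide_of_nat_bounds[of 1 "m - k choose k"]
  unfolding xsol_def by auto

lemma xsub_bounds: "0 \<le> xsub m k f e \<and> xsub m k f e \<le> 1"
proof -
  define q where "q = real (m - k choose k) / real (m choose k)"
  have "real (m - k choose k) \<le> real (m choose k)"
    using binomial_mono_upper[of "m - k" m k] by simp
  hence "0 \<le> q" "q \<le> 1"
    unfolding q_def by (cases "m choose k = 0"; simp add: divide_le_eq_1)+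
  thus ?thesis
    using divide_of_nat_bounds[of q] divide_of_nat_bounds[of 1 "2 * k choose k"]
    unfolding xsub_def q_def[symmetric] by auto
qed

lemma sprob_bounds_sum:
  assumes "e \<in> edges3 m k"
  shows "xsol m k e \<le> sprob m k e"
    and "sprob m k e \<le> (\<Sum>f\<in>edges3 m k. xsol m k f * xsub m k f e)"
proof -
  have "sprob m k e = measure_pmf.prob (shadow_pmf (edges3 m k) (xsol m k) (xsub m k)) {A. e \<in> A}"
    unfolding sprob_def shadow_def shadow_pmf_def ..
  moreover have "xsub m k e e = 1"
    by (simp add: xsub_def)
  ultimately show "xsol m k e \<le> sprob m k e"
    and "sprob m k e \<le> (\<Sum>f\<in>edges3 m k. xsol m k f * xsub m k f e)"
    using prob_in_shadow_pmf_bounds[of "edges3 m k" e "xsub m k" "xsol m k"]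
      finite_edges3 assms xsol_bounds xsub_bounds by simp_all
qed

lemma sum_xsol_xsub_above:
  assumes e: "e \<in> edges3 m k" and F: "F \<subseteq> edges3 m k - {e}"
    and above: "\<And>f. f \<in> edges3 m k \<Longrightarrow> f \<noteq> e \<Longrightarrow> (snd f, fst e) \<in> (edges3 m k)\<^sup>* \<Longrightarrow> f \<in> F"
  shows "(\<Sum>f\<in>edges3 m k. xsol m k f * xsub m k f e)
       = xsol m k e + (\<Sum>f\<in>F. xsol m k f * xsub m k f e)"
proof -
  have "(\<Sum>f\<in>edges3 m k. xsol m k f * xsub m k f e)
      = xsol m k e * xsub m k e e + (\<Sum>f\<in>edges3 m k - {e}. xsol m k f * xsub m k f e)"
    using sum.remove[OF finite_edges3 e] .
  also have "(\<Sum>f\<in>edges3 m k - {e}. xsol m k f * xsub m k f e) = (\<Sum>f\<in>F. xsol m k f * xsub m k f e)"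
  proof (rule sum.mono_neutral_right[OF _ F])
    show "\<forall>f\<in>edges3 m k - {e} - F. xsol m k f * xsub m k f e = 0"
    proof
      fix f assume f: "f \<in> edges3 m k - {e} - F"
      hence "e \<notin> desc m k f"
        using above unfolding desc_def by blast
      thus "xsol m k f * xsub m k f e = 0"
        using f by (auto simp: xsub_def)
    qed
  qed (simp add: finite_edges3)
  finally show ?thesis
    by (simp add: xsub_def)
qed

lemma sum_xsol_xsub_layer1:
  assumes "((0, {}), (1, S)) \<in> edges3 m k"
  shows "(\<Sum>f\<in>edges3 m k. xsol m k f * xsub m k f ((0, {}), (1, S))) = xsol m k ((0, {}), (1, S))"
proof -
  have "(snd f, (0, {})) \<notin> (edges3 m k)\<^sup>*" if "f \<in> edges3 m k" for f
    using rtrancl_edges3_layer[of "snd f" "(0, {})" m k] head_layer_edges3[OF that] by auto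
  hence "(\<Sum>f\<in>edges3 m k. xsol m k f * xsub m k f ((0, {}), (1, S)))
      = xsol m k ((0, {}), (1, S)) + (\<Sum>f\<in>{}. xsol m k f * xsub m k f ((0, {}), (1, S)))"
    by (intro sum_xsol_xsub_above[OF assms]) auto
  thus ?thesis
    by simp
qed

lemma sum_xsol_xsub_layer2:
  assumes e: "((1, S), (2, T)) \<in> edges3 m k"
  shows "(\<Sum>f\<in>edges3 m k. xsol m k f * xsub m k f ((1, S), (2, T))) = 2 * xsol m k ((1, S), (2, T))"
proof -
  let ?e = "((1, S), (2, T))" and ?f = "((0, {}), (1, S))"
  have f: "?f \<in> edges3 m k"
    using e by (auto simp: edges3_def)
  have above: "f = ?f" if "f \<in> edges3 m k" "(snd f, (1, S)) \<in> (edges3 m k)\<^sup>*" for f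
  proof -
    have "snd f = (1, S)"
      using rtrancl_edges3_layer[OF that(2)] head_layer_edges3[OF that(1)] by auto
    thus ?thesis
      using that(1) by (auto simp: edges3_def)
  qed
  have "(\<Sum>f\<in>edges3 m k. xsol m k f * xsub m k f ?e)
      = xsol m k ?e + (\<Sum>f\<in>{?f}. xsol m k f * xsub m k f ?e)"
  proof (rule sum_xsol_xsub_above[OF e])
    show "{?f} \<subseteq> edges3 m k - {?e}"
      using f by simp
  qed (use above in simp)
  also have "(\<Sum>f\<in>{?f}. xsol m k f * xsub m k f ?e) = xsol m k ?e"
    using e by (simp add: xsol_def xsub_def desc_def elayer_def)
  finally show ?thesis
    by simp
qed

lemma edges3_layer3_iff:
  "((2, T), (3, U)) \<in> edges3 m k \<longleftrightarrow>
     T \<subseteq> {1..m} \<and> card T = 2 * k \<and> U \<subseteq> {1..m} \<and> card U = k \<and> U \<subseteq> T"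
  unfolding edges3_def by auto

lemma sum_layer2_xsol_xsub_layer3:
  assumes e: "((2, T), (3, U)) \<in> edges3 m k"
  shows "(\<Sum>S | S \<subseteq> T \<and> card S = k. xsol m k ((1, S), (2, T)) * xsub m k ((1, S), (2, T)) ((2, T), (3, U)))
       = xsol m k ((2, T), (3, U))"
proof -
  have "finite T" "card T = 2 * k"
    using e finite_subset unfolding edges3_layer3_iff by auto
  hence "card {S. S \<subseteq> T \<and> card S = k} = 2 * k choose k"
    by (simp add: n_subsets)
  moreover have "xsub m k ((1, S), (2, T)) ((2, T), (3, U)) = 1" for S
    using e by (simp add: xsub_def desc_def elayer_def)
  ultimately show ?thesis
    by (simp add: xsol_def elayer_def)
qed

lemma sum_layer1_xsol_xsub_layer3:
  assumes mk: "2 * k \<le> m" and e: "((2, T), (3, U)) \<in> edges3 m k"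
  shows "(\<Sum>S | S \<subseteq> T \<and> card S = k. xsol m k ((0, {}), (1, S)) * xsub m k ((0, {}), (1, S)) ((2, T), (3, U)))
       = xsol m k ((2, T), (3, U))"
proof -
  define a where "a = real (m - k choose k)"
  define N where "N = real (m choose k)"
  define n where "n = m - 2 * k"
  have "a > 0" "N > 0"
    unfolding a_def N_def using mk by simp_all
  have T: "finite T" "U \<subseteq> T" "card U = k" "card T = 2 * k"
    using e finite_subset unfolding edges3_layer3_iff by auto
  have "xsol m k ((0, {}), (1, S)) * xsub m k ((0, {}), (1, S)) ((2, T), (3, U))
      = 1 / N * (1 / real (n + card (U \<inter> S) choose card (U \<inter> S)))"
    if "S \<subseteq> T" "card S = k" for S
  proof -
    have "((1, S), (2, T)) \<in> edges3 m k"
      using that e unfolding edges3_def edges3_layer3_iff by auto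
    hence "((2, T), (3, U)) \<in> desc m k ((0, {}), (1, S))"
      using e unfolding desc_def by auto
    thus ?thesis
      using \<open>a > 0\<close> by (simp add: xsol_def xsub_def elayer_def eset_def a_def N_def n_def Int_commute)
  qed
  hence "(\<Sum>S | S \<subseteq> T \<and> card S = k. xsol m k ((0, {}), (1, S)) * xsub m k ((0, {}), (1, S)) ((2, T), (3, U)))
      = 1 / N * (\<Sum>S | S \<subseteq> T \<and> card S = k. 1 / real (n + card (U \<inter> S) choose card (U \<inter> S)))"
    by (simp add: sum_distrib_left)
  also have "\<dots> = 1 / N * (real (n + 2 * k choose k) / real (n + k choose k))"
    using sum_subsets_inv_binomial_card_inter[OF T] by simp
  also have "\<dots> = 1 / N * (N / a)"
    using mk unfolding n_def N_def a_def by (simp add: Nat.add_diff_assoc2)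
  finally show ?thesis
    using \<open>N > 0\<close> by (simp add: xsol_def elayer_def a_def)
qed

lemma sum_xsol_xsub_layer3:
  assumes mk: "2 * k \<le> m" and e: "((2, T), (3, U)) \<in> edges3 m k"
  shows "(\<Sum>f\<in>edges3 m k. xsol m k f * xsub m k f ((2, T), (3, U))) = 3 * xsol m k ((2, T), (3, U))"
proof -
  let ?e = "((2, T), (3, U))" and ?P = "{S. S \<subseteq> T \<and> card S = k}"
  let ?F1 = "(\<lambda>S. ((0, {}), (1, S))) ` ?P" and ?F2 = "(\<lambda>S. ((1, S), (2, T))) ` ?P"
  have "finite T"
    using e finite_subset unfolding edges3_layer3_iff by auto
  hence "finite ?P"
    by (auto intro: finite_subset[of _ "Pow T"])
  have "(\<Sum>f\<in>edges3 m k. xsol m k f * xsub m k f ?e)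
      = xsol m k ?e + (\<Sum>f\<in>?F1 \<union> ?F2. xsol m k f * xsub m k f ?e)"
  proof (rule sum_xsol_xsub_above[OF e])
    show "?F1 \<union> ?F2 \<subseteq> edges3 m k - {?e}"
      using e unfolding edges3_def by auto
  next
    fix f assume f: "f \<in> edges3 m k" "f \<noteq> ?e" "(snd f, fst ?e) \<in> (edges3 m k)\<^sup>*"
    have "snd f = (2, T) \<or> fst (snd f) = 1 \<and> snd (snd f) \<subseteq> T"
      using rtrancl_edges3_layer[OF f(3)] head_layer_edges3[OF f(1)] by auto
    thus "f \<in> ?F1 \<union> ?F2"
      using f(1) unfolding edges3_def by auto
  qed
  also have "(\<Sum>f\<in>?F1 \<union> ?F2. xsol m k f * xsub m k f ?e)
      = (\<Sum>f\<in>?F1. xsol m k f * xsub m k f ?e) + (\<Sum>f\<in>?F2. xsol m k f * xsub m k f ?e)"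
    using \<open>finite ?P\<close> by (intro sum.union_disjoint) auto
  also have "(\<Sum>f\<in>?F1. xsol m k f * xsub m k f ?e) = xsol m k ?e"
    using sum_layer1_xsol_xsub_layer3[OF mk e] by (simp add: sum.reindex inj_on_def)
  also have "(\<Sum>f\<in>?F2. xsol m k f * xsub m k f ?e) = xsol m k ?e"
    using sum_layer2_xsol_xsub_layer3[OF e] by (simp add: sum.reindex inj_on_def)
  finally show ?thesis
    by simp
qed

lemma sum_xsol_xsub_le:
  assumes mk: "2 * k \<le> m" and e: "e \<in> edges3 m k"
  shows "(\<Sum>f\<in>edges3 m k. xsol m k f * xsub m k f e) \<le> 3 * xsol m k e"
proof -
  have "0 \<le> xsol m k e"
    using xsol_bounds by blast
  from e consider (layer1) S where "e = ((0, {}), (1, S))"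
    | (layer2) S T where "e = ((1, S), (2, T))" | (layer3) T U where "e = ((2, T), (3, U))"
    unfolding edges3_def by blast
  thus ?thesis
  proof cases
    case layer1
    thus ?thesis
      using sum_xsol_xsub_layer1 e \<open>0 \<le> xsol m k e\<close> by simp
  next
    case layer2
    thus ?thesis
      using sum_xsol_xsub_layer2 e \<open>0 \<le> xsol m k e\<close> by simp
  next
    case layer3
    thus ?thesis
      using sum_xsol_xsub_layer3[OF mk] e by simp
  qed
qed

lemma sprob_bounds:
  assumes "2 * k \<le> m" "e \<in> edges3 m k"
  shows "xsol m k e \<le> sprob m k e \<and> sprob m k e \<le> 3 * xsol m k e"
  using sprob_bounds_sum[OF assms(2)] sum_xsol_xsub_le[OF assms] by linarith

theorem lemma4:
  shows "\<exists>\<rho>0>0. \<forall>\<rho>::real. 0 < \<rho> \<and> \<rho> \<le> \<rho>0 \<longrightarrow>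
           (\<exists>M::nat. \<forall>m k::nat. m \<ge> M \<and> real k = \<rho> * real m \<longrightarrow>
              (\<forall>e\<in>edges3 m k. xsol m k e \<le> sprob m k e \<and> sprob m k e \<le> 6 * xsol m k e))"
proof (intro exI[of _ "1 / 2 :: real"] conjI allI impI exI[of _ 0] ballI)
  fix \<rho> :: real and m k :: nat and e
  assume \<rho>: "0 < \<rho> \<and> \<rho> \<le> 1 / 2" and mk: "0 \<le> m \<and> real k = \<rho> * real m"
    and e: "e \<in> edges3 m k"
  have "\<rho> * real m \<le> 1 / 2 * real m"
    using \<rho> by (intro mult_right_mono) auto
  hence "2 * k \<le> m"
    using mk by linarith
  thus "xsol m k e \<le> sprob m k e" and "sprob m k e \<le> 6 * xsol m k e"
    using sprob_bounds[OF _ e] xsol_bounds[of m k e] by auto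
qed simp

end
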